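(* Let $S$ be a random $*$-tree on a $*$-tree $B\subseteq\mathbb{A}^*$ with bounded offspring distributions $\{M_x\}_{x\in B}$. Let $\mathscr{A}$ assign to each $x\in B'$ a nonempty monotonic collection $\mathscr{A}_x$ of subsets of $W_{B'}(x)$. Define $g_{\mathscr{A}}:[0,1]\to[0,1]$ by $g_{\mathscr{A}}(s)=\sup_{x\in B'}\mathbb{P}(M_x^{(s)}\notin\mathscr{A}_x)$, and let $s_0$ be the smallest fixed point of $g_{\mathscr{A}}$ in $[0,1]$. Then $\sup_{x\in B'}\mathbb{P}\big(S^x\text{ has no }\mathscr{A}^x\text{-}*\text{-subtree}\ \big|\ x\in S\big)\le s_0.$
   Context: $\mathbb{A}$ is a finite alphabet, $\mathbb{A}^*$ the finite words (with empty word $\emptyset$); $j<i$ means $j$ is a proper prefix of $i$. For $S\subseteq\mathbb{A}^*$ and $i\in S$, the height is $h_S(i)=|\{j\in S:j<i\}|$. A $*$-tree is $S\subseteq\mathbb{A}^*$ with $\emptyset\in S$, such that every $\emptyset\ne i\in S$ has a unique $j\in S$ with $j<i$ and $h_S(j)=h_S(i)-1$, and each $S_n=h_S^{-1}(n)$ is finite. For $i\in S$: $W_S(i)=\{j\in\mathbb{A}^*: ij\in S_{h_S(i)+1}\}$ and $S^i=\{j:ij\in S\}$. A $*$-subtree of $S$ is a $*$-tree $Q\subseteq S$ such that for every $i\in Q$, $\{j\in S:j<i\}\subseteq Q$. Random $*$-tree on a $*$-tree $B$: given independent random variables $M_x$ ($x\in B$) with $M_x\subseteq W_B(x)$, set $S_0=\{\emptyset\}$,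 $S_n=\bigcup_{i\in S_{n-1}}\{ij:j\in M_i\}$, $S=\bigcup_nS_n$. $B'=\{i\in B:\mathbb{P}(i\in S)>0\}$. The offspring distributions are bounded if there is $C>0$ with $\mathbb{P}(|M_x|<C)=1$ for all $x\in B'$. For a map $x\mapsto\mathscr{A}_x$, a $*$-tree $Q$ is an $\mathscr{A}$-$*$-tree if $W_Q(i)\in\mathscr{A}_i$ for all $i\in Q$; $\mathscr{A}^x$ is the map $i\mapsto\mathscr{A}_{xi}$. $\mathscr{A}_x$ is monotonic if $X\in\mathscr{A}_x$ and $X\subseteq Y\subseteq W_{B'}(x)$ imply $Y\in\mathscr{A}_x$. $M_x^{(s)}=M_x\cap Y$ with $Y$ independent of $M_x$, $\mathbb{P}(Y=D)=(1-s)^{|D|}s^{|W_B(x)\setminus D|}$ for $D\subseteq W_B(x)$. *)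

theory Defs
  imports "HOL-Probability.Probability" "HOL-Library.Sublist"
begin

text \<open>Words over a finite alphabet are lists; j < i (proper prefix) is strict_prefix j i.\<close>

definition height :: "'a list set \<Rightarrow> 'a list \<Rightarrow> nat" where
  "height S i = card {j \<in> S. strict_prefix j i}"

definition level :: "'a list set \<Rightarrow> nat \<Rightarrow> 'a list set" where
  "level S n = {i \<in> S. height S i = n}"

definition star_tree :: "'a list set \<Rightarrow> bool" where
  "star_tree S \<longleftrightarrow> [] \<in> S \<and>
     (\<forall>i\<in>S. i \<noteq> [] \<longrightarrow> (\<exists>!j. j \<in> S \<and> strict_prefix j i \<and> height S j = height S i - 1)) \<and>
     (\<forall>n. finite (level S n))"

definition W :: "'a list set \<Rightarrow> 'a list \<Rightarrow> 'a list set" where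
  "W S i = {j. i @ j \<in> level S (height S i + 1)}"

definition subtree_at :: "'a list set \<Rightarrow> 'a list \<Rightarrow> 'a list set" where
  "subtree_at S i = {j. i @ j \<in> S}"

definition star_subtree :: "'a list set \<Rightarrow> 'a list set \<Rightarrow> bool" where
  "star_subtree Q S \<longleftrightarrow> star_tree Q \<and> Q \<subseteq> S \<and>
     (\<forall>i\<in>Q. \<forall>j\<in>S. strict_prefix j i \<longrightarrow> j \<in> Q)"

definition A_star_tree :: "('a list \<Rightarrow> 'a list set set) \<Rightarrow> 'a list set \<Rightarrow> bool" where
  "A_star_tree A Q \<longleftrightarrow> star_tree Q \<and> (\<forall>i\<in>Q. W Q i \<in> A i)"

fun rlevel :: "('a list \<Rightarrow> 'a list set) \<Rightarrow> nat \<Rightarrow> 'a list set" where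
  "rlevel m 0 = {[]}"
| "rlevel m (Suc n) = (\<Union>i\<in>rlevel m n. (\<lambda>j. i @ j) ` m i)"

definition rtree :: "('a list \<Rightarrow> 'a list set) \<Rightarrow> 'a list set" where
  "rtree m = (\<Union>n. rlevel m n)"

text \<open>P(M_x^(s) \<notin> A_x) where M_x^(s) = M_x \<inter> Y, Y independent of M_x with
  P(Y = D) = (1-s)^|D| s^|Wx - D| for D \<subseteq> Wx = W_B(x).\<close>
definition thin_prob :: "'w measure \<Rightarrow> ('b \<Rightarrow> 'w \<Rightarrow> 'c set) \<Rightarrow> 'c set \<Rightarrow> 'c set set \<Rightarrow> 'b \<Rightarrow> real \<Rightarrow> real" where
  "thin_prob M Mx Wx Ax x s =
     (\<Sum>D\<in>Pow Wx. (1 - s) ^ card D * s ^ card (Wx - D) *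
        measure M {\<omega> \<in> space M. Mx x \<omega> \<inter> D \<notin> Ax})"

end

theory Submission
  imports Defs
begin

text \<open>Call a node y viable to depth n if the offspring sets below y contain an A-tree of
  depth n. Given the offspring set of y, the events that the children of y are viable to depth n
  depend on disjoint families of offspring variables and are hence independent. If each of them
  fails with probability at most s0, the set of viable children dominates the thinning of the
  offspring at rate s0, so by monotonicity of A_y the node y fails to depth n + 1 with
  probability at most g(s0) = s0. Failing at some depth is an increasing limit of these events,
  so it also has probability at most s0. As offspring sets are finite, the children of a node
  viable to every depth that are themselves viable to every depth form a set in A_y, and they
  span an A-subtree. Finally, whether x lies in S depends only on the offspring of the ancestors
  of x, and the viability of x only on that of its descendants; these events are independent,
  which bounds the conditional probability by s0.\<close>

section \<open>Heights in a set of words\<close>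

lemma finite_strict_prefixes: "finite {j. strict_prefix j (z::'a list)}"
  by (rule finite_subset[of _ "set (prefixes z)"]) auto

lemma height_strict_mono:
  assumes "q \<in> S" "strict_prefix q q'"
  shows "height S q < height S q'"
proof -
  have "{j \<in> S. strict_prefix j q} \<subset> {j \<in> S. strict_prefix j q'}"
    using assms by (auto intro: prefix_order.less_trans)
  moreover have "finite {j \<in> S. strict_prefix j q'}"
    using finite_strict_prefixes[of q'] by (rule finite_subset[rotated]) auto
  ultimately show ?thesis unfolding height_def by (rule psubset_card_mono[rotated])
qed

lemma prefix_eq_if_height_eq:
  assumes "q \<in> S" "q' \<in> S" "prefix q z" "prefix q' z" "height S q = height S q'"
  shows "q = q'"
  using prefix_same_cases[OF assms(3,4)] height_strict_mono[of q S q'] height_strict_mono[of q' S q]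
    assms
  by (auto simp: strict_prefix_def)

lemma height_Nil [simp]: "height S [] = 0"
  unfolding height_def by simp

lemma Nil_notin_W: "[] \<notin> W B y"
  unfolding W_def level_def by auto

lemma W_D: "j \<in> W B y \<Longrightarrow> y @ j \<in> B \<and> height B (y @ j) = Suc (height B y)"
  unfolding W_def level_def by auto

lemma finite_vimage_append: "finite L \<Longrightarrow> finite ((\<lambda>j. y @ j) -` L)"
  by (rule finite_vimageI) (auto simp: inj_on_def)

lemma finite_W: "star_tree B \<Longrightarrow> finite (W B y)"
  using finite_vimage_append[of "level B (height B y + 1)" y]
  unfolding star_tree_def W_def vimage_def by auto

section \<open>Trees generated by offspring sets\<close>

lemma mem_rtree_iff: "i \<in> rtree m \<longleftrightarrow> (\<exists>n. i \<in> rlevel m n)"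
  unfolding rtree_def by auto

lemma rlevelE:
  assumes "i \<in> rlevel m (Suc n)"
  obtains p j where "p \<in> rlevel m n" "j \<in> m p" "i = p @ j"
  using assms by auto

text \<open>m i is the offspring set of the node x @ i of B, so rtree m is the tree grown below x,
  written in coordinates relative to x.\<close>

locale generated_tree =
  fixes B :: "'a list set" and x :: "'a list" and m :: "'a list \<Rightarrow> 'a list set"
  assumes star_tree: "star_tree B"
    and root_in_B: "x \<in> B"
    and offspring_W: "\<And>i. x @ i \<in> B \<Longrightarrow> m i \<subseteq> W B (x @ i)"
begin

lemma rlevel_D: "i \<in> rlevel m n \<Longrightarrow> x @ i \<in> B \<and> height B (x @ i) = height B x + n"
proof (induction n arbitrary: i)
  case 0 then show ?case using root_in_B by simp
next
  case (Suc n)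
  then obtain p j where p: "p \<in> rlevel m n" "j \<in> m p" "i = p @ j" by (auto elim: rlevelE)
  with Suc.IH offspring_W have "j \<in> W B (x @ p)" "height B (x @ p) = height B x + n" by blast+
  with W_D[OF this(1)] p(3) show ?case by simp
qed

lemma rlevel_unique: "i \<in> rlevel m n \<Longrightarrow> i \<in> rlevel m n' \<Longrightarrow> n = n'"
  using rlevel_D[of i n] rlevel_D[of i n'] by simp

lemma rlevel_prefix: "i \<in> rlevel m n \<Longrightarrow> k \<le> n \<Longrightarrow> \<exists>c\<in>rlevel m k. prefix c i"
proof (induction n arbitrary: i)
  case 0 then show ?case by auto
next
  case (Suc n)
  show ?case
  proof (cases "k = Suc n")
    case False
    from Suc.prems obtain p j where p: "p \<in> rlevel m n" "j \<in> m p" "i = p @ j"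
      by (auto elim: rlevelE)
    with Suc.IH False Suc.prems(2) obtain c where "c \<in> rlevel m k" "prefix c p" by fastforce
    then show ?thesis using p(3) prefix_prefix by blast
  qed (use Suc in auto)
qed

lemma rlevel_prefix_unique:
  assumes "p \<in> rlevel m k" "i \<in> rlevel m k" "prefix p j" "prefix i j"
  shows "p = i"
  using prefix_eq_if_height_eq[of "x @ p" B "x @ i" "x @ j"] rlevel_D assms by auto

lemma height_rtree:
  assumes i: "i \<in> rlevel m n"
  shows "height (rtree m) i = n"
proof -
  define lv where "lv p = height B (x @ p) - height B x" for p
  let ?P = "{p \<in> rtree m. strict_prefix p i}"
  have lv: "p \<in> rlevel m k \<Longrightarrow> lv p = k" for p k using rlevel_D[of p k] by (simp add: lv_def)
  have "bij_betw lv ?P {..<n}"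
  proof (rule bij_betw_imageI)
    show "inj_on lv ?P"
    proof
      fix p p' assume "p \<in> ?P" "p' \<in> ?P" "lv p = lv p'"
      moreover from this(1,2) obtain k k' where "p \<in> rlevel m k" "p' \<in> rlevel m k'"
        by (auto simp: mem_rtree_iff)
      ultimately show "p = p'"
        using lv rlevel_prefix_unique[of p k p' i] by (auto simp: strict_prefix_def)
    qed
    show "lv ` ?P = {..<n}"
    proof (intro equalityI subsetI)
      fix k assume "k \<in> lv ` ?P"
      then obtain p where "p \<in> ?P" "k = lv p" by blast
      then obtain k' where p: "p \<in> rlevel m k'" "strict_prefix p i" "k = k'"
        using lv by (auto simp: mem_rtree_iff)
      then have "height B (x @ p) < height B (x @ i)"
        using rlevel_D by (intro height_strict_mono) (auto simp: strict_prefix_def)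
      then show "k \<in> {..<n}" using rlevel_D[OF p(1)] rlevel_D[OF i] p(3) by simp
    next
      fix k assume "k \<in> {..<n}"
      with rlevel_prefix[OF i, of k] obtain c where c: "c \<in> rlevel m k" "prefix c i" by auto
      moreover have "c \<noteq> i" using rlevel_unique[OF c(1)] i \<open>k \<in> {..<n}\<close> by auto
      ultimately show "k \<in> lv ` ?P"
        using lv[OF c(1)] by (auto simp: mem_rtree_iff strict_prefix_def)
    qed
  qed
  then show ?thesis unfolding height_def by (simp add: bij_betw_same_card)
qed

lemma level_rtree: "level (rtree m) n = rlevel m n"
  unfolding level_def using height_rtree by (auto simp: mem_rtree_iff)

lemma star_tree_rtree: "star_tree (rtree m)"
  unfolding star_tree_def
proof (intro conjI ballI allI impI)
  show "[] \<in> rtree m" by (auto simp: mem_rtree_iff intro: exI[of _ 0])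
next
  fix n
  have "finite ((\<lambda>j. x @ j) -` level B (height B x + n))"
    using star_tree by (intro finite_vimage_append) (simp add: star_tree_def)
  moreover have "rlevel m n \<subseteq> (\<lambda>j. x @ j) -` level B (height B x + n)"
    using rlevel_D by (auto simp: level_def)
  ultimately show "finite (level (rtree m) n)"
    unfolding level_rtree by (rule finite_subset[rotated])
next
  fix i assume "i \<in> rtree m" "i \<noteq> []"
  then obtain n where "i \<in> rlevel m n" by (auto simp: mem_rtree_iff)
  moreover with \<open>i \<noteq> []\<close> obtain k where "n = Suc k" by (cases n) auto
  ultimately have i: "i \<in> rlevel m (Suc k)" by simp
  then obtain p j where p: "p \<in> rlevel m k" "j \<in> m p" "i = p @ j" by (auto elim: rlevelE)
  have "j \<noteq> []" using rlevel_unique[of p k "Suc k"] i p by auto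
  show "\<exists>!j. j \<in> rtree m \<and> strict_prefix j i \<and> height (rtree m) j = height (rtree m) i - 1"
  proof (rule ex1I[of _ p])
    show "p \<in> rtree m \<and> strict_prefix p i \<and> height (rtree m) p = height (rtree m) i - 1"
      using p \<open>j \<noteq> []\<close> height_rtree[OF i] height_rtree[OF p(1)]
      by (auto simp: mem_rtree_iff strict_prefix_def)
  next
    fix p'
    assume p': "p' \<in> rtree m \<and> strict_prefix p' i \<and> height (rtree m) p' = height (rtree m) i - 1"
    then have "p' \<in> rlevel m k"
      using height_rtree[OF i] height_rtree by (auto simp: mem_rtree_iff)
    from this p(1) show "p' = p"
      by (rule rlevel_prefix_unique) (use p' p(3) in \<open>auto simp: strict_prefix_def\<close>)
  qed
qed

lemma W_rtree:
  assumes "i \<in> rtree m"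
  shows "W (rtree m) i = m i"
proof -
  obtain n where i: "i \<in> rlevel m n" using assms by (auto simp: mem_rtree_iff)
  have "j \<in> m i" if "i @ j \<in> rlevel m (Suc n)" for j
  proof -
    from that obtain p j' where p: "p \<in> rlevel m n" "j' \<in> m p" "i @ j = p @ j'"
      by (auto elim: rlevelE)
    have "p = i" using p(1) i by (rule rlevel_prefix_unique) (use p(3) in \<open>auto simp: prefix_def\<close>)
    then show ?thesis using p by auto
  qed
  then show ?thesis using i by (auto simp: W_def level_rtree height_rtree)
qed

lemma A_star_tree_rtree: "(\<And>i. i \<in> rtree m \<Longrightarrow> m i \<in> A i) \<Longrightarrow> A_star_tree A (rtree m)"
  unfolding A_star_tree_def by (simp add: star_tree_rtree W_rtree)

end

locale generated_subtree = generated_tree +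
  fixes m0 :: "'a list \<Rightarrow> 'a list set"
  assumes generated_root: "generated_tree B [] m0"
    and root_in_rtree: "x \<in> rtree m0"
    and offspring_subset: "\<And>i. i \<in> rtree m \<Longrightarrow> m i \<subseteq> m0 (x @ i)"
begin

sublocale root: generated_tree B "[]" m0 by (rule generated_root)

lemma rlevel_shift: "i \<in> rlevel m n \<Longrightarrow> x @ i \<in> rlevel m0 (height B x + n)"
proof (induction n arbitrary: i)
  case 0 then show ?case using root_in_rtree root.rlevel_D by (auto simp: mem_rtree_iff)
next
  case (Suc n)
  then obtain p j where p: "p \<in> rlevel m n" "j \<in> m p" "i = p @ j" by (auto elim: rlevelE)
  then have "j \<in> m0 (x @ p)" using offspring_subset by (auto simp: mem_rtree_iff)
  with Suc.IH[OF p(1)] have "(x @ p) @ j \<in> rlevel m0 (Suc (height B x + n))"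
    by (simp only: rlevel.simps) blast
  with p(3) show ?case by simp
qed

lemma rtree_prefix_closed:
  assumes i: "i \<in> rtree m" and j: "j \<in> subtree_at (rtree m0) x" and ji: "strict_prefix j i"
  shows "j \<in> rtree m"
proof -
  obtain n where n: "i \<in> rlevel m n" using i by (auto simp: mem_rtree_iff)
  obtain k where k: "x @ j \<in> rlevel m0 k" using j by (auto simp: subtree_at_def mem_rtree_iff)
  have hj: "x @ j \<in> B" "height B (x @ j) = k" using root.rlevel_D[OF k] by auto
  have hi: "height B (x @ i) = height B x + n" using rlevel_D[OF n] by simp
  have "height B x \<le> k"
    using height_strict_mono[OF root_in_B, of "x @ j"] hj
    by (cases j) (auto simp: strict_prefix_def)
  moreover have "k < height B x + n"
    using height_strict_mono[OF hj(1), of "x @ i"] ji hj hi by (auto simp: strict_prefix_def)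
  ultimately have "k - height B x \<le> n" by linarith
  then obtain c where c: "c \<in> rlevel m (k - height B x)" "prefix c i"
    using rlevel_prefix[OF n] by blast
  have "x @ c \<in> rlevel m0 k"
    using rlevel_shift[OF c(1)] \<open>height B x \<le> k\<close> by simp
  then have "x @ c = x @ j"
    using k by (rule root.rlevel_prefix_unique[where j = "x @ i"])
      (use c(2) ji in \<open>auto simp: strict_prefix_def\<close>)
  then show ?thesis using c(1) by (auto simp: mem_rtree_iff)
qed

lemma star_subtree_rtree: "star_subtree (rtree m) (subtree_at (rtree m0) x)"
proof -
  have "rtree m \<subseteq> subtree_at (rtree m0) x"
    using rlevel_shift by (fastforce simp: subtree_at_def mem_rtree_iff)
  then show ?thesis
    unfolding star_subtree_def using star_tree_rtree rtree_prefix_closed by blast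
qed

end

section \<open>Product Bernoulli weights\<close>

definition prod_bernoulli :: "'b set \<Rightarrow> ('b \<Rightarrow> real) \<Rightarrow> 'b set \<Rightarrow> real" where
  "prod_bernoulli U q D = (\<Prod>j\<in>U. if j \<in> D then q j else 1 - q j)"

lemma prod_bernoulli_nonneg:
  "(\<And>j. j \<in> U \<Longrightarrow> 0 \<le> q j \<and> q j \<le> 1) \<Longrightarrow> 0 \<le> prod_bernoulli U q D"
  unfolding prod_bernoulli_def by (intro prod_nonneg) auto

lemma prod_bernoulli_const:
  assumes "finite U" "D \<subseteq> U"
  shows "prod_bernoulli U (\<lambda>_. r) D = r ^ card D * (1 - r) ^ card (U - D)"
proof -
  have "prod_bernoulli U (\<lambda>_. r) D
      = (\<Prod>j\<in>U \<inter> {j. j \<in> D}. r) * (\<Prod>j\<in>U \<inter> - {j. j \<in> D}. 1 - r)"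
    unfolding prod_bernoulli_def by (rule prod.If_cases) (rule assms)
  moreover have "U \<inter> {j. j \<in> D} = D" "U \<inter> - {j. j \<in> D} = U - D" using assms by auto
  ultimately show ?thesis by simp
qed

lemma sum_prod_bernoulli_insert:
  assumes "finite U" "a \<notin> U"
  shows "(\<Sum>D\<in>Pow (insert a U). prod_bernoulli (insert a U) q D * \<psi> D)
       = (\<Sum>D\<in>Pow U. prod_bernoulli U q D * (q a * \<psi> (insert a D) + (1 - q a) * \<psi> D))"
proof -
  have weight_insert: "prod_bernoulli (insert a U) q (insert a D) = q a * prod_bernoulli U q D"
    "prod_bernoulli (insert a U) q D = (1 - q a) * prod_bernoulli U q D" if "D \<subseteq> U" for D
    using assms that unfolding prod_bernoulli_def by (auto intro!: prod.cong)
  have "inj_on (insert a) (Pow U)"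
    using assms(2) by (intro inj_onI) (metis Diff_insert_absorb PowD subsetD)
  moreover have "Pow U \<inter> insert a ` Pow U = {}" using assms by auto
  ultimately have "(\<Sum>D\<in>Pow (insert a U). prod_bernoulli (insert a U) q D * \<psi> D)
      = (\<Sum>D\<in>Pow U. prod_bernoulli (insert a U) q D * \<psi> D)
        + (\<Sum>D\<in>Pow U. prod_bernoulli (insert a U) q (insert a D) * \<psi> (insert a D))"
    unfolding Pow_insert using assms by (simp add: sum.union_disjoint sum.reindex)
  also have "\<dots> = (\<Sum>D\<in>Pow U. prod_bernoulli U q D * (q a * \<psi> (insert a D) + (1 - q a) * \<psi> D))"
    unfolding sum.distrib[symmetric]
    by (intro sum.cong refl) (simp add: weight_insert algebra_simps)
  finally show ?thesis .
qed

lemma sum_prod_bernoulli: "finite U \<Longrightarrow> (\<Sum>D\<in>Pow U. prod_bernoulli U q D) = 1"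
proof (induction U rule: finite_induct)
  case empty then show ?case by (simp add: prod_bernoulli_def)
next
  case (insert a U)
  then show ?case using sum_prod_bernoulli_insert[OF insert(1,2), of q "\<lambda>_. 1"] by simp
qed

lemma sum_prod_bernoulli_marginal:
  assumes "finite U" "V \<subseteq> U"
  shows "(\<Sum>D\<in>Pow U. prod_bernoulli U q D * \<psi> (D \<inter> V)) = (\<Sum>E\<in>Pow V. prod_bernoulli V q E * \<psi> E)"
  using assms
proof (induction U arbitrary: V \<psi> rule: finite_induct)
  case empty then show ?case by simp
next
  case (insert a U)
  show ?case
  proof (cases "a \<in> V")
    case True
    define V' where "V' = V - {a}"
    have V: "V = insert a V'" "a \<notin> V'" "V' \<subseteq> U" "finite V'"
      using True insert V'_def by (auto intro: finite_subset)
    define \<psi>' where "\<psi>' E = q a * \<psi> (insert a E) + (1 - q a) * \<psi> E" for E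
    have "(\<Sum>D\<in>Pow (insert a U). prod_bernoulli (insert a U) q D * \<psi> (D \<inter> V))
        = (\<Sum>D\<in>Pow U. prod_bernoulli U q D * \<psi>' (D \<inter> V'))"
      unfolding sum_prod_bernoulli_insert[OF insert(1,2)] \<psi>'_def
      using V insert(2) by (intro sum.cong refl) (auto simp: Int_insert_left Int_insert_right)
    also have "\<dots> = (\<Sum>E\<in>Pow V'. prod_bernoulli V' q E * \<psi>' E)"
      using insert.IH[OF V(3)] .
    also have "\<dots> = (\<Sum>E\<in>Pow V. prod_bernoulli V q E * \<psi> E)"
      unfolding V(1) sum_prod_bernoulli_insert[OF V(4,2)] \<psi>'_def ..
    finally show ?thesis .
  next
    case False
    then have "V \<subseteq> U" using insert by auto
    have "(\<Sum>D\<in>Pow (insert a U). prod_bernoulli (insert a U) q D * \<psi> (D \<inter> V))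
        = (\<Sum>D\<in>Pow U. prod_bernoulli U q D * \<psi> (D \<inter> V))"
      unfolding sum_prod_bernoulli_insert[OF insert(1,2)]
      using False by (intro sum.cong refl) (auto simp: algebra_simps)
    also have "\<dots> = (\<Sum>E\<in>Pow V. prod_bernoulli V q E * \<psi> E)" using insert.IH[OF \<open>V \<subseteq> U\<close>] .
    finally show ?thesis .
  qed
qed

lemma sum_prod_bernoulli_antitone_le:
  assumes "finite U"
    and "\<And>j. j \<in> U \<Longrightarrow> 0 \<le> q j \<and> q j \<le> p j \<and> p j \<le> 1"
    and "\<And>D D'. D \<subseteq> D' \<Longrightarrow> D' \<subseteq> U \<Longrightarrow> \<phi> D' \<le> \<phi> D"
  shows "(\<Sum>D\<in>Pow U. prod_bernoulli U p D * \<phi> D) \<le> (\<Sum>D\<in>Pow U. prod_bernoulli U q D * \<phi> D)"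
  using assms
proof (induction U arbitrary: \<phi> rule: finite_induct)
  case empty then show ?case by (simp add: prod_bernoulli_def)
next
  case (insert a U)
  define \<psi> where "\<psi> r E = r * \<phi> (insert a E) + (1 - r) * \<phi> E" for r E
  have qa: "0 \<le> q a" "q a \<le> p a" "p a \<le> 1" using insert(4) by auto
  have "(\<Sum>D\<in>Pow (insert a U). prod_bernoulli (insert a U) p D * \<phi> D)
      = (\<Sum>D\<in>Pow U. prod_bernoulli U p D * \<psi> (p a) D)"
    unfolding sum_prod_bernoulli_insert[OF insert(1,2)] \<psi>_def ..
  also have "\<dots> \<le> (\<Sum>D\<in>Pow U. prod_bernoulli U p D * \<psi> (q a) D)"
  proof (intro sum_mono mult_left_mono)
    fix D assume "D \<in> Pow U"
    then have "\<phi> (insert a D) \<le> \<phi> D" using insert(5)[of D "insert a D"] by auto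
    then have "(p a - q a) * (\<phi> (insert a D) - \<phi> D) \<le> 0"
      using qa by (intro mult_nonneg_nonpos) auto
    then show "\<psi> (p a) D \<le> \<psi> (q a) D" unfolding \<psi>_def by (simp add: algebra_simps)
    show "0 \<le> prod_bernoulli U p D" using insert(4) by (intro prod_bernoulli_nonneg) force
  qed
  also have "\<dots> \<le> (\<Sum>D\<in>Pow U. prod_bernoulli U q D * \<psi> (q a) D)"
  proof (rule insert.IH)
    show "\<And>j. j \<in> U \<Longrightarrow> 0 \<le> q j \<and> q j \<le> p j \<and> p j \<le> 1" using insert(4) by auto
    fix D D' assume "D \<subseteq> D'" "D' \<subseteq> U"
    then have "\<phi> (insert a D') \<le> \<phi> (insert a D)" "\<phi> D' \<le> \<phi> D"
      using insert(5)[of "insert a D" "insert a D'"] insert(5)[of D D'] by auto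
    then show "\<psi> (q a) D' \<le> \<psi> (q a) D" unfolding \<psi>_def using qa
      by (intro add_mono mult_left_mono) auto
  qed
  also have "\<dots> = (\<Sum>D\<in>Pow (insert a U). prod_bernoulli (insert a U) q D * \<phi> D)"
    unfolding sum_prod_bernoulli_insert[OF insert(1,2)] \<psi>_def ..
  finally show ?case .
qed

lemma (in prob_space) thin_prob_eq_sum_prod_bernoulli:
  assumes "finite Wx"
  shows "thin_prob M Mx Wx Ax x s =
    (\<Sum>D\<in>Pow Wx. prod_bernoulli Wx (\<lambda>_. 1 - s) D * prob {\<omega> \<in> space M. Mx x \<omega> \<inter> D \<notin> Ax})"
  unfolding thin_prob_def using assms by (intro sum.cong refl) (auto simp: prod_bernoulli_const)

lemma (in prob_space) thin_prob_le_1: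
  assumes "finite Wx" "0 \<le> s" "s \<le> 1"
  shows "thin_prob M Mx Wx Ax x s \<le> 1"
proof -
  have "thin_prob M Mx Wx Ax x s \<le> (\<Sum>D\<in>Pow Wx. prod_bernoulli Wx (\<lambda>_. 1 - s) D * 1)"
    unfolding thin_prob_eq_sum_prod_bernoulli[OF assms(1)] using assms(2,3)
    by (intro sum_mono mult_left_mono prob_le_1 prod_bernoulli_nonneg) auto
  then show ?thesis using sum_prod_bernoulli[OF assms(1)] by simp
qed

section \<open>Random trees with independent offspring\<close>

lemma (in algebra) sets_Collect_iff_const: "{x\<in>\<Omega>. P x} \<in> M \<Longrightarrow> {x\<in>\<Omega>. P x \<longleftrightarrow> b} \<in> M"
  by (cases b) (auto intro: sets_Collect_neg)

locale random_star_tree = prob_space M for M :: "'w measure" +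
  fixes Mx :: "'a list \<Rightarrow> 'w \<Rightarrow> 'a list set" and B B' :: "'a list set"
    and A :: "'a list \<Rightarrow> 'a list set set"
  assumes star_tree: "star_tree B"
    and indep: "indep_vars (\<lambda>_. count_space UNIV) Mx B"
    and offspring_W: "\<And>x \<omega>. x \<in> B \<Longrightarrow> \<omega> \<in> space M \<Longrightarrow> Mx x \<omega> \<subseteq> W B x"
    and B'_subset: "B' \<subseteq> B"
    and A_mono: "\<And>x X Y. x \<in> B' \<Longrightarrow> X \<in> A x \<Longrightarrow> X \<subseteq> Y \<Longrightarrow> Y \<subseteq> W B' x \<Longrightarrow> Y \<in> A x"
    and A_subset: "\<And>x. x \<in> B' \<Longrightarrow> A x \<subseteq> Pow (W B' x)"
begin

definition offspring_events :: "'a list set \<Rightarrow> 'w set set" where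
  "offspring_events K = sigma_sets (space M)
     (\<Union>z\<in>K. {Mx z -` X \<inter> space M | X. X \<in> sets (count_space UNIV)})"

definition descendants :: "'a list \<Rightarrow> 'a list set" where
  "descendants z = {w \<in> B. prefix z w}"

definition ancestors :: "'a list \<Rightarrow> 'a list set" where
  "ancestors z = {w \<in> B. strict_prefix w z}"

definition children :: "'a list \<Rightarrow> 'a list set" where
  "children y = W B' y \<inter> W B y"

text \<open>viable n y \<omega>: the offspring sets below y contain an A-tree of depth n whose nodes
  all lie in B'.\<close>

primrec viable :: "nat \<Rightarrow> 'a list \<Rightarrow> 'w \<Rightarrow> bool" where
  "viable 0 y \<omega> = True"
| "viable (Suc n) y \<omega> = ({j \<in> Mx y \<omega> \<inter> children y. viable n (y @ j) \<omega>} \<in> A y)"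

lemma generated_tree_root: "\<omega> \<in> space M \<Longrightarrow> generated_tree B [] (\<lambda>z. Mx z \<omega>)"
  by unfold_locales (use star_tree offspring_W in \<open>auto simp: star_tree_def\<close>)

lemma sigma_algebra_offspring_events: "sigma_algebra (space M) (offspring_events K)"
  unfolding offspring_events_def by (rule sigma_algebra_sigma_sets) auto

lemma offspring_events_subset_events: "K \<subseteq> B \<Longrightarrow> offspring_events K \<subseteq> events"
  using indep unfolding offspring_events_def indep_vars_def2
  by (intro sets.sigma_sets_subset) (auto dest!: measurable_sets)

lemma offspring_events_mono: "K \<subseteq> K' \<Longrightarrow> offspring_events K \<subseteq> offspring_events K'"
  unfolding offspring_events_def by (intro sigma_sets_mono') auto

lemma offspring_event: "z \<in> K \<Longrightarrow> {\<omega> \<in> space M. P (Mx z \<omega>)} \<in> offspring_events K"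
  unfolding offspring_events_def
  by (intro sigma_sets.Basic UN_I[of z]) (auto intro!: exI[of _ "{X. P X}"])

lemma offspring_event_in_events: "z \<in> B \<Longrightarrow> {\<omega> \<in> space M. P (Mx z \<omega>)} \<in> events"
  using offspring_event[of z "{z}"] offspring_events_subset_events[of "{z}"] by auto

lemma indep_offspring_events:
  assumes "\<And>j. j \<in> J \<Longrightarrow> I j \<subseteq> B" "disjoint_family_on I J"
  shows "indep_sets (\<lambda>j. offspring_events (I j)) J"
  unfolding offspring_events_def
proof (rule indep_sets_collect_sigma)
  show "indep_sets (\<lambda>z. {Mx z -` X \<inter> space M |X. X \<in> sets (count_space UNIV)}) (\<Union>j\<in>J. I j)"
    using indep assms(1) unfolding indep_vars_def2 by (auto intro: indep_sets_mono_index)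
  show "Int_stable {Mx z -` X \<inter> space M |X. X \<in> sets (count_space UNIV)}" (is "Int_stable ?G")
    for z
  proof (rule Int_stableI)
    fix a b assume "a \<in> ?G" "b \<in> ?G"
    then obtain X Y where "a = Mx z -` X \<inter> space M" "b = Mx z -` Y \<inter> space M" by auto
    then show "a \<inter> b \<in> ?G" by (intro CollectI exI[of _ "X \<inter> Y"]) auto
  qed
qed (rule assms(2))

lemma finite_children: "finite (children y)"
  unfolding children_def using finite_W[OF star_tree] by auto

lemma children_in_B': "j \<in> children y \<Longrightarrow> y @ j \<in> B'"
  unfolding children_def W_def level_def by auto

lemma children_subset_W: "children y \<subseteq> W B y"
  unfolding children_def by auto

lemma descendants_children_subset: "j \<in> W B z \<Longrightarrow> descendants (z @ j) \<subseteq> descendants z"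
  unfolding descendants_def by (auto simp: prefix_def)

lemma children_pattern_iff: "E \<subseteq> children z \<Longrightarrow>
    (\<forall>j\<in>children z. viable n (z @ j) \<omega> \<longleftrightarrow> j \<in> E) \<longleftrightarrow> E = {j \<in> children z. viable n (z @ j) \<omega>}"
  by auto

lemma viable_Suc_iff: "viable (Suc n) z \<omega> \<longleftrightarrow> (\<exists>E\<in>Pow (children z).
    Mx z \<omega> \<inter> E \<in> A z \<and> (\<forall>j\<in>children z. viable n (z @ j) \<omega> \<longleftrightarrow> j \<in> E))"
proof -
  let ?E = "{j \<in> children z. viable n (z @ j) \<omega>}"
  have "viable (Suc n) z \<omega> \<longleftrightarrow> Mx z \<omega> \<inter> ?E \<in> A z"
    by (simp add: Int_def conj_assoc)
  also have "\<dots> \<longleftrightarrow> (\<exists>E\<in>Pow (children z). Mx z \<omega> \<inter> E \<in> A z \<and> E = ?E)" by auto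
  finally show ?thesis by (auto simp: children_pattern_iff)
qed

lemma not_viable_Suc_iff: "\<not> viable (Suc n) z \<omega> \<longleftrightarrow> (\<exists>E\<in>Pow (children z).
    Mx z \<omega> \<inter> E \<notin> A z \<and> (\<forall>j\<in>children z. viable n (z @ j) \<omega> \<longleftrightarrow> j \<in> E))"
proof -
  let ?E = "{j \<in> children z. viable n (z @ j) \<omega>}"
  have "\<not> viable (Suc n) z \<omega> \<longleftrightarrow> Mx z \<omega> \<inter> ?E \<notin> A z"
    by (simp add: Int_def conj_assoc)
  also have "\<dots> \<longleftrightarrow> (\<exists>E\<in>Pow (children z). Mx z \<omega> \<inter> E \<notin> A z \<and> E = ?E)" by auto
  finally show ?thesis by (auto simp: children_pattern_iff)
qed

lemma viable_event_descendants:
  "z \<in> B \<Longrightarrow> {\<omega> \<in> space M. viable n z \<omega>} \<in> offspring_events (descendants z)"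
proof (induction n arbitrary: z)
  case 0
  interpret sigma_algebra "space M" "offspring_events (descendants z)"
    by (rule sigma_algebra_offspring_events)
  show ?case using sets_Collect_const by simp
next
  case (Suc n)
  interpret sigma_algebra "space M" "offspring_events (descendants z)"
    by (rule sigma_algebra_offspring_events)
  have "{\<omega> \<in> space M. viable n (z @ j) \<omega> \<longleftrightarrow> j \<in> E} \<in> offspring_events (descendants z)"
    if "j \<in> children z" for j E
  proof -
    have j: "j \<in> W B z" using that children_subset_W by blast
    then have "{\<omega> \<in> space M. viable n (z @ j) \<omega>} \<in> offspring_events (descendants (z @ j))"
      using Suc.IH[of "z @ j"] W_D by blast
    also have "\<dots> \<subseteq> offspring_events (descendants z)"
      using j by (intro offspring_events_mono descendants_children_subset)
    finally show ?thesis by (rule sets_Collect_iff_const)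
  qed
  moreover have "{\<omega> \<in> space M. viable (Suc n) z \<omega>} = {\<omega> \<in> space M. \<exists>E\<in>Pow (children z).
      Mx z \<omega> \<inter> E \<in> A z \<and> (\<forall>j\<in>children z. viable n (z @ j) \<omega> \<longleftrightarrow> j \<in> E)}"
    by (simp only: viable_Suc_iff)
  moreover have "z \<in> descendants z" using Suc.prems by (simp add: descendants_def)
  ultimately show ?case
    by (simp only:) (intro sets_Collect_finite_Ex sets_Collect_conj sets_Collect_finite_All
        offspring_event finite_children finite_Pow_iff[THEN iffD2])
qed

lemma viable_event: "z \<in> B \<Longrightarrow> {\<omega> \<in> space M. viable n z \<omega>} \<in> events"
  using viable_event_descendants offspring_events_subset_events[of "descendants z"]
  by (auto simp: descendants_def)

lemma viable_Suc_imp: "y \<in> B' \<Longrightarrow> viable (Suc n) y \<omega> \<Longrightarrow> viable n y \<omega>"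
proof (induction n arbitrary: y)
  case (Suc n)
  have "{j \<in> Mx y \<omega> \<inter> children y. viable (Suc n) (y @ j) \<omega>}
      \<subseteq> {j \<in> Mx y \<omega> \<inter> children y. viable n (y @ j) \<omega>}"
    using Suc.IH children_in_B' by auto
  moreover have "{j \<in> Mx y \<omega> \<inter> children y. viable n (y @ j) \<omega>} \<subseteq> W B' y"
    by (auto simp: children_def)
  ultimately show ?case using Suc.prems A_mono by simp
qed simp

lemma viable_antimono: "y \<in> B' \<Longrightarrow> m \<le> n \<Longrightarrow> viable n y \<omega> \<Longrightarrow> viable m y \<omega>"
  by (induction n) (auto simp: le_Suc_eq dest: viable_Suc_imp)

lemma indep_node_children:
  assumes "y \<in> B"
  shows "indep_sets (\<lambda>k. offspring_events (case k of None \<Rightarrow> {y} | Some j \<Rightarrow> descendants (y @ j)))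
           (insert None (Some ` W B y))"
proof (rule indep_offspring_events)
  show "(case k of None \<Rightarrow> {y} | Some j \<Rightarrow> descendants (y @ j)) \<subseteq> B" for k
    using assms by (auto simp: descendants_def split: option.splits)
  have "y \<notin> descendants (y @ j)" if "j \<in> W B y" for j
    using that Nil_notin_W by (auto simp: descendants_def prefix_def)
  moreover have "descendants (y @ j) \<inter> descendants (y @ j') = {}"
    if "j \<in> W B y" "j' \<in> W B y" "j \<noteq> j'" for j j'
  proof (rule ccontr)
    assume "descendants (y @ j) \<inter> descendants (y @ j') \<noteq> {}"
    then obtain w where "prefix (y @ j) w" "prefix (y @ j') w" by (auto simp: descendants_def)
    with that W_D[of j] W_D[of j'] prefix_eq_if_height_eq[of "y @ j" B "y @ j'" w] show False
      by auto
  qed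
  ultimately show "disjoint_family_on (\<lambda>k. case k of None \<Rightarrow> {y} | Some j \<Rightarrow> descendants (y @ j))
      (insert None (Some ` W B y))"
    unfolding disjoint_family_on_def by (auto split: option.splits)
qed

lemma prob_offspring_and_children_pattern:
  fixes P :: "'a list set \<Rightarrow> bool" and n :: nat
  assumes y: "y \<in> B" and E: "E \<subseteq> children y"
  defines "pattern \<equiv> {\<omega> \<in> space M. P (Mx y \<omega>) \<and>
    (\<forall>j\<in>children y. viable n (y @ j) \<omega> \<longleftrightarrow> j \<in> E)}"
  shows "pattern \<in> events"
    and "prob pattern = prob {\<omega> \<in> space M. P (Mx y \<omega>)} *
      prod_bernoulli (children y) (\<lambda>j. prob {\<omega> \<in> space M. viable n (y @ j) \<omega>}) E"
proof -
  let ?J = "insert None (Some ` children y)"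
  let ?blocks = "\<lambda>k. case k of None \<Rightarrow> {y} | Some j \<Rightarrow> descendants (y @ j)"
  define ev where "ev k = (case k of None \<Rightarrow> {\<omega> \<in> space M. P (Mx y \<omega>)}
    | Some j \<Rightarrow> {\<omega> \<in> space M. viable n (y @ j) \<omega> \<longleftrightarrow> j \<in> E})" for k
  have indep: "indep_sets (\<lambda>k. offspring_events (?blocks k)) ?J"
    using children_subset_W by (intro indep_sets_mono_index[OF _ indep_node_children[OF y]]) auto
  have ev: "ev k \<in> offspring_events (?blocks k)" if "k \<in> ?J" for k
  proof (cases k)
    case (Some j)
    then have "y @ j \<in> B" using that children_subset_W W_D by blast
    interpret sigma_algebra "space M" "offspring_events (descendants (y @ j))"
      by (rule sigma_algebra_offspring_events)
    show ?thesis unfolding ev_def Some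
      using viable_event_descendants[OF \<open>y @ j \<in> B\<close>] by (simp add: sets_Collect_iff_const)
  qed (simp add: ev_def offspring_event)
  have blocks_B: "?blocks k \<subseteq> B" if "k \<in> ?J" for k
    using that y children_subset_W by (auto simp: descendants_def split: option.splits)
  have pattern_eq: "pattern = (\<Inter>k\<in>?J. ev k)"
    unfolding pattern_def ev_def by auto
  have "ev k \<in> events" if "k \<in> ?J" for k
    using ev[OF that] offspring_events_subset_events[OF blocks_B[OF that]] by blast
  then show "pattern \<in> events"
    unfolding pattern_eq using finite_children by (intro sets.finite_INT) auto
  have "prob pattern = (\<Prod>k\<in>?J. prob (ev k))"
    unfolding pattern_eq using finite_children ev by (intro indep_setsD[OF indep]) auto
  also have "\<dots> = prob (ev None) * (\<Prod>j\<in>children y. prob (ev (Some j)))"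
    using finite_children by (simp add: prod.reindex)
  also have "(\<Prod>j\<in>children y. prob (ev (Some j))) =
      prod_bernoulli (children y) (\<lambda>j. prob {\<omega> \<in> space M. viable n (y @ j) \<omega>}) E"
    unfolding prod_bernoulli_def
  proof (intro prod.cong refl)
    fix j assume "j \<in> children y"
    then have "{\<omega> \<in> space M. viable n (y @ j) \<omega>} \<in> events"
      using children_subset_W W_D by (blast intro: viable_event)
    then show "prob (ev (Some j)) = (if j \<in> E then prob {\<omega> \<in> space M. viable n (y @ j) \<omega>}
        else 1 - prob {\<omega> \<in> space M. viable n (y @ j) \<omega>})"
      by (auto simp: ev_def prob_neg)
  qed
  finally show "prob pattern = prob {\<omega> \<in> space M. P (Mx y \<omega>)} *
      prod_bernoulli (children y) (\<lambda>j. prob {\<omega> \<in> space M. viable n (y @ j) \<omega>}) E"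
    by (simp add: ev_def)
qed

lemma prob_not_viable_Suc:
  assumes "y \<in> B"
  shows "prob {\<omega> \<in> space M. \<not> viable (Suc n) y \<omega>} = (\<Sum>E\<in>Pow (children y).
    prob {\<omega> \<in> space M. Mx y \<omega> \<inter> E \<notin> A y} *
    prod_bernoulli (children y) (\<lambda>j. prob {\<omega> \<in> space M. viable n (y @ j) \<omega>}) E)"
proof -
  define pattern where "pattern E = {\<omega> \<in> space M. Mx y \<omega> \<inter> E \<notin> A y \<and>
    (\<forall>j\<in>children y. viable n (y @ j) \<omega> \<longleftrightarrow> j \<in> E)}" for E
  have union: "{\<omega> \<in> space M. \<not> viable (Suc n) y \<omega>} = (\<Union>E\<in>Pow (children y). pattern E)"
    unfolding pattern_def by (simp only: not_viable_Suc_iff) blast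
  have "prob {\<omega> \<in> space M. \<not> viable (Suc n) y \<omega>} = (\<Sum>E\<in>Pow (children y). prob (pattern E))"
    unfolding union
  proof (rule finite_measure_finite_Union)
    show "disjoint_family_on pattern (Pow (children y))"
      unfolding disjoint_family_on_def pattern_def using children_pattern_iff by blast
  qed (use prob_offspring_and_children_pattern(1)[OF assms] finite_children
    in \<open>auto simp: pattern_def\<close>)
  also have "\<dots> = (\<Sum>E\<in>Pow (children y). prob {\<omega> \<in> space M. Mx y \<omega> \<inter> E \<notin> A y} *
      prod_bernoulli (children y) (\<lambda>j. prob {\<omega> \<in> space M. viable n (y @ j) \<omega>}) E)"
    unfolding pattern_def
    by (intro sum.cong refl prob_offspring_and_children_pattern(2)[OF assms]) auto
  finally show ?thesis .
qed

lemma prob_offspring_not_in_A_antimono: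
  assumes "y \<in> B'" "D \<subseteq> D'" "D' \<subseteq> W B' y"
  shows "prob {\<omega> \<in> space M. Mx y \<omega> \<inter> D' \<notin> A y} \<le> prob {\<omega> \<in> space M. Mx y \<omega> \<inter> D \<notin> A y}"
proof (rule finite_measure_mono)
  show "{\<omega> \<in> space M. Mx y \<omega> \<inter> D' \<notin> A y} \<subseteq> {\<omega> \<in> space M. Mx y \<omega> \<inter> D \<notin> A y}"
  proof safe
    fix \<omega> assume "\<omega> \<in> space M" "Mx y \<omega> \<inter> D' \<notin> A y" "Mx y \<omega> \<inter> D \<in> A y"
    moreover have "Mx y \<omega> \<inter> D \<subseteq> Mx y \<omega> \<inter> D'" "Mx y \<omega> \<inter> D' \<subseteq> W B' y" using assms by auto
    ultimately show False using A_mono[OF assms(1)] by blast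
  qed
  show "{\<omega> \<in> space M. Mx y \<omega> \<inter> D \<notin> A y} \<in> events"
    using assms(1) B'_subset by (intro offspring_event_in_events) blast
qed

lemma prob_offspring_not_in_A_Int_children:
  assumes "y \<in> B'"
  shows "prob {\<omega> \<in> space M. Mx y \<omega> \<inter> (D \<inter> children y) \<notin> A y}
    \<le> prob {\<omega> \<in> space M. Mx y \<omega> \<inter> D \<notin> A y}"
proof (rule finite_measure_mono)
  have "Mx y \<omega> \<inter> (D \<inter> children y) = Mx y \<omega> \<inter> D" if "\<omega> \<in> space M" "Mx y \<omega> \<inter> D \<in> A y" for \<omega>
  proof -
    have "Mx y \<omega> \<inter> D \<subseteq> W B' y" using that(2) A_subset[OF assms] by blast
    moreover have "Mx y \<omega> \<subseteq> W B y" using offspring_W that(1) assms B'_subset by blast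
    ultimately show ?thesis by (auto simp: children_def)
  qed
  then show "{\<omega> \<in> space M. Mx y \<omega> \<inter> (D \<inter> children y) \<notin> A y}
      \<subseteq> {\<omega> \<in> space M. Mx y \<omega> \<inter> D \<notin> A y}" by auto
  show "{\<omega> \<in> space M. Mx y \<omega> \<inter> D \<notin> A y} \<in> events"
    using assms B'_subset by (intro offspring_event_in_events) blast
qed

lemma prob_not_viable_Suc_le:
  assumes y: "y \<in> B'" and s: "0 \<le> s" "s \<le> 1"
    and children_le: "\<And>j. j \<in> children y \<Longrightarrow> prob {\<omega> \<in> space M. \<not> viable n (y @ j) \<omega>} \<le> s"
  shows "prob {\<omega> \<in> space M. \<not> viable (Suc n) y \<omega>} \<le> thin_prob M Mx (W B y) (A y) y s"
proof -
  let ?U = "children y"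
  let ?\<phi> = "\<lambda>E. prob {\<omega> \<in> space M. Mx y \<omega> \<inter> E \<notin> A y}"
  have yB: "y \<in> B" using y B'_subset by blast
  have "prob {\<omega> \<in> space M. \<not> viable (Suc n) y \<omega>} =
      (\<Sum>E\<in>Pow ?U. prod_bernoulli ?U (\<lambda>j. prob {\<omega> \<in> space M. viable n (y @ j) \<omega>}) E * ?\<phi> E)"
    using prob_not_viable_Suc[OF yB] by (simp add: mult.commute)
  also have "\<dots> \<le> (\<Sum>E\<in>Pow ?U. prod_bernoulli ?U (\<lambda>_. 1 - s) E * ?\<phi> E)"
  proof (rule sum_prod_bernoulli_antitone_le[OF finite_children])
    fix j assume j: "j \<in> ?U"
    then have "{\<omega> \<in> space M. viable n (y @ j) \<omega>} \<in> events"
      using children_subset_W W_D by (blast intro: viable_event)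
    then show "0 \<le> 1 - s \<and> 1 - s \<le> prob {\<omega> \<in> space M. viable n (y @ j) \<omega>} \<and>
        prob {\<omega> \<in> space M. viable n (y @ j) \<omega>} \<le> 1"
      using children_le[OF j] s by (simp add: prob_neg)
  next
    fix D D' assume "D \<subseteq> D'" "D' \<subseteq> ?U"
    then show "?\<phi> D' \<le> ?\<phi> D"
      by (intro prob_offspring_not_in_A_antimono[OF y]) (auto simp: children_def)
  qed
  also have "\<dots> = (\<Sum>D\<in>Pow (W B y). prod_bernoulli (W B y) (\<lambda>_. 1 - s) D * ?\<phi> (D \<inter> ?U))"
    by (rule sum_prod_bernoulli_marginal[symmetric, OF finite_W[OF star_tree] children_subset_W])
  also have "\<dots> \<le> (\<Sum>D\<in>Pow (W B y). prod_bernoulli (W B y) (\<lambda>_. 1 - s) D * ?\<phi> D)"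
    using s prob_offspring_not_in_A_Int_children[OF y]
    by (intro sum_mono mult_left_mono prod_bernoulli_nonneg) auto
  also have "\<dots> = thin_prob M Mx (W B y) (A y) y s"
    by (rule thin_prob_eq_sum_prod_bernoulli[symmetric, OF finite_W[OF star_tree]])
  finally show ?thesis .
qed

text \<open>Only finitely many children can fail, each at some finite depth; beyond the largest
  of these depths only forever viable children remain viable.\<close>

lemma forever_viable_children:
  assumes y: "y \<in> B'" and viable: "\<forall>n. viable n y \<omega>"
  shows "{j \<in> Mx y \<omega> \<inter> children y. \<forall>n. viable n (y @ j) \<omega>} \<in> A y"
proof -
  let ?C = "{j \<in> Mx y \<omega> \<inter> children y. \<forall>n. viable n (y @ j) \<omega>}"
  let ?F = "Mx y \<omega> \<inter> children y - ?C"
  have "\<forall>j\<in>?F. \<exists>n. \<not> viable n (y @ j) \<omega>" by auto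
  from bchoice[OF this] obtain depth where depth: "\<forall>j\<in>?F. \<not> viable (depth j) (y @ j) \<omega>" ..
  define N where "N = (\<Sum>j\<in>?F. depth j)"
  have "{j \<in> Mx y \<omega> \<inter> children y. viable N (y @ j) \<omega>} \<subseteq> ?C"
  proof (rule ccontr)
    assume "\<not> ?thesis"
    then obtain j where j: "j \<in> ?F" "viable N (y @ j) \<omega>" by blast
    have "y @ j \<in> B'" using j(1) children_in_B' by blast
    moreover have "depth j \<le> N"
      unfolding N_def using j(1) finite_children by (intro member_le_sum) auto
    ultimately have "viable (depth j) (y @ j) \<omega>" using j(2) by (rule viable_antimono)
    then show False using depth j(1) by blast
  qed
  moreover have "{j \<in> Mx y \<omega> \<inter> children y. viable N (y @ j) \<omega>} \<in> A y"
    using viable[rule_format, of "Suc N"] by simp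
  moreover have "?C \<subseteq> W B' y" by (auto simp: children_def)
  ultimately show ?thesis using A_mono[OF y] by blast
qed

lemma A_subtree_if_forever_viable:
  assumes \<omega>: "\<omega> \<in> space M" and x: "x \<in> B'" and x_in: "x \<in> rtree (\<lambda>z. Mx z \<omega>)"
    and viable: "\<forall>n. viable n x \<omega>"
  shows "\<exists>Q. star_subtree Q (subtree_at (rtree (\<lambda>z. Mx z \<omega>)) x) \<and> A_star_tree (\<lambda>i. A (x @ i)) Q"
proof -
  define m where "m i = {j \<in> Mx (x @ i) \<omega> \<inter> children (x @ i). \<forall>n. viable n (x @ i @ j) \<omega>}" for i
  interpret generated_subtree B x m "\<lambda>z. Mx z \<omega>"
  proof (intro generated_subtree.intro generated_subtree_axioms.intro
      generated_tree_root[OF \<omega>] x_in)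
    show "generated_tree B x m"
      using x B'_subset star_tree children_subset_W by unfold_locales (auto simp: m_def)
  qed (auto simp: m_def)
  have invariant: "x @ i \<in> B' \<and> (\<forall>n. viable n (x @ i) \<omega>)" if "i \<in> rlevel m k" for i k
    using that
  proof (induction k arbitrary: i)
    case (Suc k)
    then obtain p j where "p \<in> rlevel m k" "j \<in> m p" "i = p @ j" by (auto elim: rlevelE)
    then show ?case using children_in_B'[of j "x @ p"] by (auto simp: m_def)
  qed (use x viable in simp)
  show ?thesis
  proof (intro exI conjI)
    show "star_subtree (rtree m) (subtree_at (rtree (\<lambda>z. Mx z \<omega>)) x)"
      by (rule star_subtree_rtree)
    show "A_star_tree (\<lambda>i. A (x @ i)) (rtree m)"
    proof (rule A_star_tree_rtree)
      fix i assume "i \<in> rtree m"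
      then obtain k where "i \<in> rlevel m k" by (auto simp: mem_rtree_iff)
      from invariant[OF this] show "m i \<in> A (x @ i)"
        using forever_viable_children[of "x @ i" \<omega>] by (simp add: m_def)
    qed
  qed
qed

lemma mem_rlevel_Suc_iff_ancestor:
  assumes \<omega>: "\<omega> \<in> space M"
  shows "x \<in> rlevel (\<lambda>z. Mx z \<omega>) (Suc n) \<longleftrightarrow>
    (\<exists>p\<in>ancestors x. p \<in> rlevel (\<lambda>z. Mx z \<omega>) n \<and> drop (length p) x \<in> Mx p \<omega>)"
proof
  assume "x \<in> rlevel (\<lambda>z. Mx z \<omega>) (Suc n)"
  then obtain p j where p: "p \<in> rlevel (\<lambda>z. Mx z \<omega>) n" "j \<in> Mx p \<omega>" "x = p @ j"
    by (auto elim: rlevelE)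
  have "p \<in> B" using generated_tree.rlevel_D[OF generated_tree_root[OF \<omega>] p(1)] by simp
  then have "j \<noteq> []" using offspring_W[OF _ \<omega>] p(2) Nil_notin_W by blast
  with \<open>p \<in> B\<close> p show "\<exists>p\<in>ancestors x. p \<in> rlevel (\<lambda>z. Mx z \<omega>) n \<and> drop (length p) x \<in> Mx p \<omega>"
    by (auto simp: ancestors_def strict_prefix_def)
next
  assume "\<exists>p\<in>ancestors x. p \<in> rlevel (\<lambda>z. Mx z \<omega>) n \<and> drop (length p) x \<in> Mx p \<omega>"
  then obtain p where p: "p \<in> ancestors x" "p \<in> rlevel (\<lambda>z. Mx z \<omega>) n" "drop (length p) x \<in> Mx p \<omega>"
    by blast
  then have "x = p @ drop (length p) x"
    by (auto simp: ancestors_def strict_prefix_def prefix_def)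
  with p(2,3) show "x \<in> rlevel (\<lambda>z. Mx z \<omega>) (Suc n)" by (simp only: rlevel.simps) blast
qed

lemma rlevel_event_ancestors:
  "{\<omega> \<in> space M. x \<in> rlevel (\<lambda>z. Mx z \<omega>) n} \<in> offspring_events (ancestors x)"
proof (induction n arbitrary: x)
  case 0
  interpret sigma_algebra "space M" "offspring_events (ancestors x)"
    by (rule sigma_algebra_offspring_events)
  show ?case using sets_Collect_const by simp
next
  case (Suc n)
  interpret sigma_algebra "space M" "offspring_events (ancestors x)"
    by (rule sigma_algebra_offspring_events)
  have "{\<omega> \<in> space M. x \<in> rlevel (\<lambda>z. Mx z \<omega>) (Suc n)} = {\<omega> \<in> space M.
      \<exists>p\<in>ancestors x. p \<in> rlevel (\<lambda>z. Mx z \<omega>) n \<and> drop (length p) x \<in> Mx p \<omega>}"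
    using mem_rlevel_Suc_iff_ancestor by blast
  moreover have "finite (ancestors x)"
    using finite_strict_prefixes[of x] by (rule finite_subset[rotated]) (auto simp: ancestors_def)
  moreover have "offspring_events (ancestors p) \<subseteq> offspring_events (ancestors x)"
    if "p \<in> ancestors x" for p
    using that by (intro offspring_events_mono)
      (auto simp: ancestors_def intro: prefix_order.less_trans)
  ultimately show ?case
    by (simp only:)
      (intro sets_Collect_finite_Ex sets_Collect_conj offspring_event subsetD[OF _ Suc.IH])
qed

lemma rtree_event_ancestors:
  "{\<omega> \<in> space M. x \<in> rtree (\<lambda>z. Mx z \<omega>)} \<in> offspring_events (ancestors x)"
proof -
  interpret sigma_algebra "space M" "offspring_events (ancestors x)"
    by (rule sigma_algebra_offspring_events)
  show ?thesis
    unfolding mem_rtree_iff by (intro sets_Collect_countable_Ex rlevel_event_ancestors)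
qed

lemma indep_ancestors_descendants:
  "indep_set (offspring_events (ancestors x)) (offspring_events (descendants x))"
proof -
  have "indep_sets (\<lambda>b. offspring_events (if b then ancestors x else descendants x)) UNIV"
    by (rule indep_offspring_events)
      (auto simp: ancestors_def descendants_def disjoint_family_on_def strict_prefix_def
        dest: prefix_order.antisym)
  then show ?thesis
    unfolding indep_set_def
    by (rule indep_sets_cong[THEN iffD1, rotated 2]) (auto split: bool.split)
qed

lemma thin_prob_le_SUP:
  assumes "y \<in> B'" "0 \<le> s" "s \<le> 1"
  shows "thin_prob M Mx (W B y) (A y) y s \<le> (SUP x\<in>B'. thin_prob M Mx (W B x) (A x) x s)"
  using assms thin_prob_le_1[OF finite_W[OF star_tree] assms(2,3)]
  by (intro cSUP_upper bdd_aboveI2) auto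

context
  fixes s :: real
  assumes s: "0 \<le> s" "s \<le> 1"
    and thin_prob_le: "\<And>y. y \<in> B' \<Longrightarrow> thin_prob M Mx (W B y) (A y) y s \<le> s"
begin

lemma prob_not_viable_le: "y \<in> B' \<Longrightarrow> prob {\<omega> \<in> space M. \<not> viable n y \<omega>} \<le> s"
proof (induction n arbitrary: y)
  case 0 then show ?case using s by simp
next
  case (Suc n)
  have "prob {\<omega> \<in> space M. \<not> viable (Suc n) y \<omega>} \<le> thin_prob M Mx (W B y) (A y) y s"
    using Suc.IH children_in_B' by (intro prob_not_viable_Suc_le[OF Suc.prems s]) blast
  then show ?case using thin_prob_le[OF Suc.prems] by linarith
qed

lemma prob_never_viable_le:
  assumes y: "y \<in> B'"
  shows "prob {\<omega> \<in> space M. \<exists>n. \<not> viable n y \<omega>} \<le> s"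
proof -
  have "y \<in> B" using y B'_subset by blast
  then have "range (\<lambda>n. {\<omega> \<in> space M. \<not> viable n y \<omega>}) \<subseteq> events"
    by (auto intro: sets.sets_Collect_neg viable_event)
  moreover have "incseq (\<lambda>n. {\<omega> \<in> space M. \<not> viable n y \<omega>})"
    using viable_Suc_imp[OF y] by (intro incseq_SucI) blast
  ultimately have "(\<lambda>n. prob {\<omega> \<in> space M. \<not> viable n y \<omega>})
      \<longlonglongrightarrow> prob (\<Union>n. {\<omega> \<in> space M. \<not> viable n y \<omega>})"
    by (rule finite_Lim_measure_incseq)
  moreover have "(\<Union>n. {\<omega> \<in> space M. \<not> viable n y \<omega>}) = {\<omega> \<in> space M. \<exists>n. \<not> viable n y \<omega>}" by auto
  ultimately show ?thesis using prob_not_viable_le[OF y] by (intro LIMSEQ_le_const2) auto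
qed

lemma prob_no_A_subtree_le:
  assumes x: "x \<in> B'"
  shows "prob {\<omega> \<in> space M. x \<in> rtree (\<lambda>z. Mx z \<omega>) \<and>
      \<not> (\<exists>Q. star_subtree Q (subtree_at (rtree (\<lambda>z. Mx z \<omega>)) x) \<and> A_star_tree (\<lambda>i. A (x @ i)) Q)}
    \<le> prob {\<omega> \<in> space M. x \<in> rtree (\<lambda>z. Mx z \<omega>)} * s"
    (is "prob ?bad \<le> prob ?in * s")
proof -
  let ?never = "{\<omega> \<in> space M. \<exists>n. \<not> viable n x \<omega>}"
  have xB: "x \<in> B" using x B'_subset by blast
  have never: "?never \<in> offspring_events (descendants x)"
  proof -
    interpret sigma_algebra "space M" "offspring_events (descendants x)"
      by (rule sigma_algebra_offspring_events)
    show ?thesis by (intro sets_Collect_countable_Ex sets_Collect_neg viable_event_descendants xB)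
  qed
  have "ancestors x \<subseteq> B" "descendants x \<subseteq> B" by (auto simp: ancestors_def descendants_def)
  then have events: "?in \<in> events" "?never \<in> events"
    using rtree_event_ancestors never offspring_events_subset_events by blast+
  have "?bad \<subseteq> ?in \<inter> ?never" using A_subtree_if_forever_viable[OF _ x] by blast
  then have "prob ?bad \<le> prob (?in \<inter> ?never)" using events by (intro finite_measure_mono) auto
  also have "\<dots> = prob ?in * prob ?never"
    using indep_ancestors_descendants rtree_event_ancestors never by (rule indep_setD)
  also have "\<dots> \<le> prob ?in * s" using prob_never_viable_le[OF x] by (intro mult_left_mono) auto
  finally show ?thesis .
qed

end

end

theorem theorem5p17:
  fixes M :: "'w measure"
    and Mx :: "'a::finite list \<Rightarrow> 'w \<Rightarrow> 'a list set"
    and B :: "'a list set"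
    and A :: "'a list \<Rightarrow> 'a list set set"
    and s0 :: real
  assumes "prob_space M"
    and "star_tree B"
    and indep: "prob_space.indep_vars M (\<lambda>_. count_space UNIV) Mx B"
    and sub: "\<forall>x\<in>B. \<forall>\<omega>\<in>space M. Mx x \<omega> \<subseteq> W B x"
  defines "S \<equiv> \<lambda>\<omega>. rtree (\<lambda>x. Mx x \<omega>)"
  defines "B' \<equiv> {i \<in> B. measure M {\<omega> \<in> space M. i \<in> S \<omega>} > 0}"
  assumes bounded: "\<exists>C::real. C > 0 \<and>
        (\<forall>x\<in>B'. measure M {\<omega> \<in> space M. real (card (Mx x \<omega>)) < C} = 1)"
    and Aprops: "\<forall>x\<in>B'. A x \<noteq> {} \<and> A x \<subseteq> Pow (W B' x) \<and>
        (\<forall>X Y. X \<in> A x \<longrightarrow> X \<subseteq> Y \<longrightarrow> Y \<subseteq> W B' x \<longrightarrow> Y \<in> A x)"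
  defines "g \<equiv> \<lambda>s. (SUP x\<in>B'. thin_prob M Mx (W B x) (A x) x s)"
  assumes s0: "s0 \<in> {0..1}" "g s0 = s0" "\<forall>t\<in>{0..1}. g t = t \<longrightarrow> s0 \<le> t"
  shows "(SUP x\<in>B'.
            measure M {\<omega> \<in> space M. x \<in> S \<omega> \<and>
               \<not> (\<exists>Q. star_subtree Q (subtree_at (S \<omega>) x) \<and> A_star_tree (\<lambda>i. A (x @ i)) Q)}
            / measure M {\<omega> \<in> space M. x \<in> S \<omega>}) \<le> s0"
proof -
  interpret random_star_tree M Mx B B' A
    using assms(1,2) indep sub Aprops unfolding B'_def
    by (intro random_star_tree.intro random_star_tree_axioms.intro) blast+
  have s01: "0 \<le> s0" "s0 \<le> 1" using s0(1) by auto
  have thin: "thin_prob M Mx (W B y) (A y) y s0 \<le> s0" if "y \<in> B'" for y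
    using thin_prob_le_SUP[OF that s01] s0(2) by (simp add: g_def)
  have "{\<omega> \<in> space M. [] \<in> S \<omega>} = space M"
    unfolding S_def by (auto simp: mem_rtree_iff intro: exI[of _ 0])
  then have "[] \<in> B'" using star_tree by (simp add: B'_def star_tree_def prob_space)
  show ?thesis
  proof (rule cSUP_least)
    show "B' \<noteq> {}" using \<open>[] \<in> B'\<close> by blast
  next
    fix x assume x: "x \<in> B'"
    then have "0 < prob {\<omega> \<in> space M. x \<in> S \<omega>}" by (simp add: B'_def)
    then show "prob {\<omega> \<in> space M. x \<in> S \<omega> \<and>
        \<not> (\<exists>Q. star_subtree Q (subtree_at (S \<omega>) x) \<and> A_star_tree (\<lambda>i. A (x @ i)) Q)}
      / prob {\<omega> \<in> space M. x \<in> S \<omega>} \<le> s0"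
      using prob_no_A_subtree_le[OF s01 thin x] by (simp add: S_def divide_le_eq mult.commute)
  qed
qed

end
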